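(* Let $S$ be an indexical set of agents, and let $P$ be a decision protocol for an information exchange $\mathcal{E}$ and failure model $\mathcal{F}$ such that SBA($S$) is valid in $\mathcal{I}_{P,\mathcal{E},\mathcal{F}}$. Then for every agent $i$ and value $v$, the formula $\mathtt{decides}_i(v)\Rightarrow B^S_i\, CB_S\,\exists v$ is valid in $\mathcal{I}_{P,\mathcal{E},\mathcal{F}}$.
   Context: Agents $\mathrm{Agt}=\{1,\dots,n\}$; decision values $V$; actions $A_i=\{\mathtt{noop}\}\cup\{\mathtt{decide}_i(v):v\in V\}$. An information exchange $\mathcal{E}$ gives each agent $i$ a tuple $(L_i,I_i,M_i,\mu_i,\delta_i)$: local states $L_i$ of form $\langle\mathit{init}_i,\mathit{time}_i,\dots\rangle$ ($\mathit{init}_i\in V$ the initial preference), initial states $I_i$, messages $M_i\ni\bot$, $\mu_i:L_i\times A_i\to(\mathrm{Agt}\to M_i)$, $\delta_i:L_i\times A_i\times\prod_jM_j\to L_i$ (preserving $\mathit{init}_i$, incrementing $\mathit{time}_i$). A decision protocol is $P=(P_i:L_i\to A_i)_i$. A failure model $\mathcal{F}=(L^*_e,I_e,\delta_e,\mathit{Adv})$ has environment states, nonempty initial ones, update $\delta_e:L^*_e\times\prod_iA_i\to L^*_e$, and a nonempty set of adversaries $(\Delta^t,\Delta^r,\Delta^s)$ with $\Delta^t,\Delta^r:\mathbb{N}\times\mathrm{Agt}\times\mathrm{Agt}\times\bigcup_iM_i\to\bigcup_iM_i$, $\Delta^s_i:\mathbb{N}\times L_i\to L_i$ (not changing $\mathit{time}_i$).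 Runs $r$ of $\mathcal{I}_{P,\mathcal{E},\mathcal{F}}$: $r(0)=((s_e,\alpha),s_1,\dots,s_n)$ with $s_e\in I_e,\alpha\in\mathit{Adv},s_i\in I_i$; from $r(k)=((s_e,\alpha),s_1,\dots,s_n)$, $r(k+1)=((\delta_e(s_e,(a_1,\dots,a_n)),\alpha),s'_1,\dots,s'_n)$ where $a_i=P_i(s_i)$ (action of $i$ at time $k$), $m_{i,j}=\mu_i(s_i,a_i)(j)$, $m'_{i,j}=\Delta^r(k,i,j,\Delta^t(k,i,j,m_{i,j}))$, $s^*_j=\delta_j(s_j,a_j,(m'_{1,j},\dots,m'_{n,j}))$, $s'_j=\Delta^s_j(k,s^*_j)$. $r_i(m)$ denotes $i$'s local state; $(r,m)\sim_i(r',m')$ iff $r_i(m)=r'_i(m')$; $K_i\phi$ holds iff $\phi$ holds at all $\sim_i$-related points. An indexical set $S$ assigns a set $S(r,m)\subseteq\mathrm{Agt}$ to each point; $i\in S$ holds at $(r,m)$ iff $i\in S(r,m)$. $B^S_i\phi:=K_i(i\in S\Rightarrow\phi)$; $E^B_S\phi:=\bigwedge_{i\in S}B^S_i\phi$ (over $i\in S(r,m)$ at the point of evaluation); $CB_S\phi:=\bigwedge_{k\ge1}(E^B_S)^k\phi$. $\mathtt{decides}_i(v)$ holds at $(r,m)$ iff $P_i(r_i(m))=\mathtt{decide}_i(v)$; $\exists v$ holds at $(r,m)$ iff some agent's initial preference in $r$ is $v$. SBA($S$) is valid in the system if in every run $r$: (Unique-Decision) each agent performs a $\mathtt{decide}$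 action at most once; (Simultaneous-Agreement($S$)) if $i\in S(r,m)$ performs $\mathtt{decide}_i(v)$ at time $m$ then every $j\in S(r,m)$ performs $\mathtt{decide}_j(v)$ at time $m$; (Validity($S$)) if $i\in S(r,m)$ performs $\mathtt{decide}_i(v)$ at time $m$ then some agent has initial preference $v$ in $r$. A formula is valid if it holds at all points. *)

theory Defs
  imports Main
begin

text \<open>Actions of agent i: noop or decide_i(v). The agent index is implicit
  (each agent only performs its own actions).\<close>
datatype 'v action = Noop | Decide 'v

text \<open>All agents' local states live in a common type 'l,
  agent i's local states being the set LS E i; similarly for messages.
  init E i s and time E i s are the components init_i and time_i of a local state.\<close>
record ('agt, 'l, 'm, 'v) iexch =
  LS :: "'agt \<Rightarrow> 'l set"
  IS :: "'agt \<Rightarrow> 'l set"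
  MS :: "'agt \<Rightarrow> 'm set"
  msg_bot :: 'm
  mu :: "'agt \<Rightarrow> 'l \<Rightarrow> 'v action \<Rightarrow> 'agt \<Rightarrow> 'm"
  dlt :: "'agt \<Rightarrow> 'l \<Rightarrow> 'v action \<Rightarrow> ('agt \<Rightarrow> 'm) \<Rightarrow> 'l"
  init :: "'agt \<Rightarrow> 'l \<Rightarrow> 'v"
  time :: "'agt \<Rightarrow> 'l \<Rightarrow> nat"

definition iexch_wf :: "('agt, 'l, 'm, 'v) iexch \<Rightarrow> bool" where
  "iexch_wf E \<longleftrightarrow>
     (\<forall>i. IS E i \<subseteq> LS E i \<and> msg_bot E \<in> MS E i) \<and>
     (\<forall>i s a j. s \<in> LS E i \<longrightarrow> mu E i s a j \<in> MS E i) \<and>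
     (\<forall>i s a ms. s \<in> LS E i \<and> (\<forall>j. ms j \<in> MS E j) \<longrightarrow>
        dlt E i s a ms \<in> LS E i \<and>
        init E i (dlt E i s a ms) = init E i s \<and>
        time E i (dlt E i s a ms) = Suc (time E i s))"

record ('agt, 'l, 'm) adversary =
  Dt :: "nat \<Rightarrow> 'agt \<Rightarrow> 'agt \<Rightarrow> 'm \<Rightarrow> 'm"
  Dr :: "nat \<Rightarrow> 'agt \<Rightarrow> 'agt \<Rightarrow> 'm \<Rightarrow> 'm"
  Ds :: "'agt \<Rightarrow> nat \<Rightarrow> 'l \<Rightarrow> 'l"

record ('agt, 'l, 'm, 'v, 'e) fmodel =
  Le :: "'e set"
  Ie :: "'e set"
  dle :: "'e \<Rightarrow> ('agt \<Rightarrow> 'v action) \<Rightarrow> 'e"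
  Adv :: "('agt, 'l, 'm) adversary set"

definition fmodel_wf :: "('agt, 'l, 'm, 'v) iexch \<Rightarrow> ('agt, 'l, 'm, 'v, 'e) fmodel \<Rightarrow> bool" where
  "fmodel_wf E F \<longleftrightarrow>
     Ie F \<subseteq> Le F \<and> Ie F \<noteq> {} \<and>
     (\<forall>se acts. se \<in> Le F \<longrightarrow> dle F se acts \<in> Le F) \<and>
     Adv F \<noteq> {} \<and>
     (\<forall>\<alpha>\<in>Adv F.
        (\<forall>k i j m. m \<in> (\<Union>l. MS E l) \<longrightarrow>
            Dt \<alpha> k i j m \<in> (\<Union>l. MS E l) \<and> Dr \<alpha> k i j m \<in> (\<Union>l. MS E l)) \<and>
        (\<forall>i k s. s \<in> LS E i \<longrightarrow> Ds \<alpha> i k s \<in> LS E i \<and> time E i (Ds \<alpha> i k s) = time E i s))"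

type_synonym ('agt, 'l, 'm, 'e) gstate = "('e \<times> ('agt, 'l, 'm) adversary) \<times> ('agt \<Rightarrow> 'l)"
type_synonym ('agt, 'l, 'm, 'e) run = "nat \<Rightarrow> ('agt, 'l, 'm, 'e) gstate"

type_synonym ('agt, 'l, 'v) protocol = "'agt \<Rightarrow> 'l \<Rightarrow> 'v action"

definition step ::
  "('agt, 'l, 'm, 'v) iexch \<Rightarrow> ('agt, 'l, 'm, 'v, 'e) fmodel \<Rightarrow> ('agt, 'l, 'v) protocol \<Rightarrow>
   nat \<Rightarrow> ('agt, 'l, 'm, 'e) gstate \<Rightarrow> ('agt, 'l, 'm, 'e) gstate" where
  "step E F P k g =
     (let se = fst (fst g); \<alpha> = snd (fst g); s = snd g;
          a = (\<lambda>i. P i (s i));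
          m' = (\<lambda>i j. Dr \<alpha> k i j (Dt \<alpha> k i j (mu E i (s i) (a i) j)))
      in ((dle F se a, \<alpha>),
          (\<lambda>j. Ds \<alpha> j k (dlt E j (s j) (a j) (\<lambda>i. m' i j)))))"

definition runs ::
  "('agt, 'l, 'm, 'v) iexch \<Rightarrow> ('agt, 'l, 'm, 'v, 'e) fmodel \<Rightarrow> ('agt, 'l, 'v) protocol \<Rightarrow>
   ('agt, 'l, 'm, 'e) run set" where
  "runs E F P = {r.
     fst (fst (r 0)) \<in> Ie F \<and> snd (fst (r 0)) \<in> Adv F \<and> (\<forall>i. snd (r 0) i \<in> IS E i) \<and>
     (\<forall>k. r (Suc k) = step E F P k (r k))}"

definition loc :: "('agt, 'l, 'm, 'e) run \<Rightarrow> 'agt \<Rightarrow> nat \<Rightarrow> 'l" where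
  "loc r i m = snd (r m) i"

type_synonym ('agt, 'l, 'm, 'e) fml = "('agt, 'l, 'm, 'e) run \<Rightarrow> nat \<Rightarrow> bool"
type_synonym ('agt, 'l, 'm, 'e) indexical = "('agt, 'l, 'm, 'e) run \<Rightarrow> nat \<Rightarrow> 'agt set"

definition Kn ::
  "('agt, 'l, 'm, 'e) run set \<Rightarrow> 'agt \<Rightarrow> ('agt, 'l, 'm, 'e) fml \<Rightarrow> ('agt, 'l, 'm, 'e) fml" where
  "Kn R i \<phi> r m \<longleftrightarrow> (\<forall>r'\<in>R. \<forall>m'. loc r' i m' = loc r i m \<longrightarrow> \<phi> r' m')"

definition Bel ::
  "('agt, 'l, 'm, 'e) run set \<Rightarrow> ('agt, 'l, 'm, 'e) indexical \<Rightarrow> 'agt \<Rightarrow>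
   ('agt, 'l, 'm, 'e) fml \<Rightarrow> ('agt, 'l, 'm, 'e) fml" where
  "Bel R S i \<phi> = Kn R i (\<lambda>r m. i \<in> S r m \<longrightarrow> \<phi> r m)"

definition EB ::
  "('agt, 'l, 'm, 'e) run set \<Rightarrow> ('agt, 'l, 'm, 'e) indexical \<Rightarrow>
   ('agt, 'l, 'm, 'e) fml \<Rightarrow> ('agt, 'l, 'm, 'e) fml" where
  "EB R S \<phi> r m \<longleftrightarrow> (\<forall>i\<in>S r m. Bel R S i \<phi> r m)"

definition CB ::
  "('agt, 'l, 'm, 'e) run set \<Rightarrow> ('agt, 'l, 'm, 'e) indexical \<Rightarrow>
   ('agt, 'l, 'm, 'e) fml \<Rightarrow> ('agt, 'l, 'm, 'e) fml" where
  "CB R S \<phi> r m \<longleftrightarrow> (\<forall>k\<ge>1. (EB R S ^^ k) \<phi> r m)"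

definition decides :: "('agt, 'l, 'v) protocol \<Rightarrow> 'agt \<Rightarrow> 'v \<Rightarrow> ('agt, 'l, 'm, 'e) fml" where
  "decides P i v r m \<longleftrightarrow> P i (loc r i m) = Decide v"

definition ex_val :: "('agt, 'l, 'm, 'v) iexch \<Rightarrow> 'v \<Rightarrow> ('agt, 'l, 'm, 'e) fml" where
  "ex_val E v r m \<longleftrightarrow> (\<exists>j. init E j (loc r j 0) = v)"

definition valid :: "('agt, 'l, 'm, 'e) run set \<Rightarrow> ('agt, 'l, 'm, 'e) fml \<Rightarrow> bool" where
  "valid R \<phi> \<longleftrightarrow> (\<forall>r\<in>R. \<forall>m. \<phi> r m)"

definition SBA_valid ::
  "('agt, 'l, 'm, 'v) iexch \<Rightarrow> ('agt, 'l, 'm, 'v, 'e) fmodel \<Rightarrow> ('agt, 'l, 'v) protocol \<Rightarrow>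
   ('agt, 'l, 'm, 'e) indexical \<Rightarrow> bool" where
  "SBA_valid E F P S \<longleftrightarrow> (\<forall>r\<in>runs E F P.
     (\<forall>i m m' v v'. decides P i v r m \<and> decides P i v' r m' \<longrightarrow> m = m') \<and>
     (\<forall>m i v. i \<in> S r m \<and> decides P i v r m \<longrightarrow> (\<forall>j\<in>S r m. decides P j v r m)) \<and>
     (\<forall>m i v. i \<in> S r m \<and> decides P i v r m \<longrightarrow> (\<exists>j. init E j (loc r j 0) = v)))"

end

theory Submission
  imports Defs
begin

text \<open>Let \<open>\<psi>\<close> say that some member of S decides v. By simultaneous agreement every member
  of S then decides v, and since a decision is a function of the local state, every member
  believes \<open>\<psi>\<close>; so \<open>\<psi>\<close> implies \<open>E\<^sup>B\<^sub>S \<psi>\<close>. By validity \<open>\<psi>\<close> implies \<open>\<exists>v\<close>, and the induction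
  rule for common belief yields \<open>\<psi> \<Rightarrow> CB\<^sub>S \<exists>v\<close>. Finally, an agent i deciding v decides v at every
  point it cannot distinguish, so at those where \<open>i \<in> S\<close> the fact \<open>\<psi>\<close> holds.\<close>

lemma decides_cong_loc:
  "loc r' i m' = loc r i m \<Longrightarrow> decides P i v r' m' = decides P i v r m"
  unfolding decides_def by simp

lemma EB_mono:
  assumes "valid R (\<lambda>r m. \<phi> r m \<longrightarrow> \<psi> r m)" and "EB R S \<phi> r m"
  shows "EB R S \<psi> r m"
  using assms unfolding valid_def EB_def Bel_def Kn_def by blast

lemma funpow_EB_induct:
  assumes implies: "valid R (\<lambda>r m. \<psi> r m \<longrightarrow> \<phi> r m)"
    and invariant: "valid R (\<lambda>r m. \<psi> r m \<longrightarrow> EB R S \<psi> r m)"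
  shows "valid R (\<lambda>r m. \<psi> r m \<longrightarrow> (EB R S ^^ k) \<phi> r m)"
proof (induction k)
  case 0
  show ?case using implies by simp
next
  case (Suc k)
  show ?case
    unfolding valid_def
  proof (intro ballI allI impI)
    fix r m assume "r \<in> R" and "\<psi> r m"
    then have "EB R S \<psi> r m" using invariant unfolding valid_def by blast
    then show "(EB R S ^^ Suc k) \<phi> r m" using EB_mono[OF Suc.IH] by simp
  qed
qed

lemma CB_induct:
  assumes "valid R (\<lambda>r m. \<psi> r m \<longrightarrow> \<phi> r m)"
    and "valid R (\<lambda>r m. \<psi> r m \<longrightarrow> EB R S \<psi> r m)"
  shows "valid R (\<lambda>r m. \<psi> r m \<longrightarrow> CB R S \<phi> r m)"
  using funpow_EB_induct[OF assms] unfolding valid_def CB_def by blast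

definition some_member_decides ::
  "('agt, 'l, 'v) protocol \<Rightarrow> ('agt, 'l, 'm, 'e) indexical \<Rightarrow> 'v \<Rightarrow> ('agt, 'l, 'm, 'e) fml" where
  "some_member_decides P S v r m \<longleftrightarrow> (\<exists>j\<in>S r m. decides P j v r m)"

lemma SBA_some_member_decides_ex_val:
  assumes "SBA_valid E F P S"
  shows "valid (runs E F P) (\<lambda>r m. some_member_decides P S v r m \<longrightarrow> ex_val E v r m)"
  using assms unfolding SBA_valid_def valid_def some_member_decides_def ex_val_def by blast

lemma SBA_some_member_decides_EB:
  assumes sba: "SBA_valid E F P S"
  shows "valid (runs E F P)
           (\<lambda>r m. some_member_decides P S v r m \<longrightarrow> EB (runs E F P) S (some_member_decides P S v) r m)"
  unfolding valid_def EB_def Bel_def Kn_def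
proof (intro ballI allI impI)
  fix r m j r' m'
  assume "r \<in> runs E F P" and "some_member_decides P S v r m" and "j \<in> S r m"
    and "loc r' j m' = loc r j m" and "j \<in> S r' m'"
  then have "decides P j v r' m'"
    using sba decides_cong_loc unfolding SBA_valid_def some_member_decides_def by metis
  with \<open>j \<in> S r' m'\<close> show "some_member_decides P S v r' m'"
    unfolding some_member_decides_def by blast
qed

theorem lemma7:
  fixes E :: "('agt::finite, 'l, 'm, 'v) iexch"
    and F :: "('agt, 'l, 'm, 'v, 'e) fmodel"
    and P :: "('agt, 'l, 'v) protocol"
    and S :: "('agt, 'l, 'm, 'e) indexical"
  assumes "iexch_wf E" and "fmodel_wf E F"
    and "SBA_valid E F P S"
  shows "\<forall>i v. valid (runs E F P)
           (\<lambda>r m. decides P i v r m \<longrightarrow> Bel (runs E F P) S i (CB (runs E F P) S (ex_val E v)) r m)"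
proof (intro allI)
  fix i v
  have CB_ex_val: "valid (runs E F P)
      (\<lambda>r m. some_member_decides P S v r m \<longrightarrow> CB (runs E F P) S (ex_val E v) r m)"
    by (rule CB_induct[OF SBA_some_member_decides_ex_val[OF assms(3)]
          SBA_some_member_decides_EB[OF assms(3)]])
  show "valid (runs E F P)
      (\<lambda>r m. decides P i v r m \<longrightarrow> Bel (runs E F P) S i (CB (runs E F P) S (ex_val E v)) r m)"
    unfolding valid_def Bel_def Kn_def
  proof (intro ballI allI impI)
    fix r :: "('agt, 'l, 'm, 'e) run" and m r' m'
    assume "decides P i v r m" and "r' \<in> runs E F P"
      and "loc r' i m' = loc r i m" and "i \<in> S r' m'"
    then have "some_member_decides P S v r' m'"
      using decides_cong_loc unfolding some_member_decides_def by metis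
    with CB_ex_val \<open>r' \<in> runs E F P\<close> show "CB (runs E F P) S (ex_val E v) r' m'"
      unfolding valid_def by blast
  qed
qed

end
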